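(* Let $p>5$ be a prime, $q=p^h$, and let $\mathcal{F}$ be the projective closure of $x^n+y^m=1$ over $\mathbb{F}_q$, where $m,n$ are positive integers with $n\ge m>2$ and $p\nmid mn$. If $\mathcal{F}$ is nonclassical with respect to the linear system $\Sigma_2$ of conics, then $p\mid(2n-1)(n+1)(n-2)(n-1)$ and $p\mid(2m-1)(m+1)(m-2)(m-1)$.
   Context: For a geometrically irreducible projective plane curve over $\mathbb{F}_q$ with function field $\overline{\mathbb{F}}_q(x,y)$, let $\varphi_0,\dots,\varphi_5$ be the monomials of degree 2 in $x,y,1$, $\tau$ separating and $D^{(k)}_\tau$ Hasse derivatives. The order sequence w.r.t. conics is the lexicographically smallest $\varepsilon_0<\dots<\varepsilon_5$ with $\det(D^{(\varepsilon_i)}_\tau\varphi_j)\neq0$; the curve is classical w.r.t. $\Sigma_2$ if $\varepsilon_i=i$ for all $i$, nonclassical otherwise. *)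

theory Defs
  imports "HOL-Computational_Algebra.Polynomial" "Jordan_Normal_Form.Determinant"
begin

definition is_subfield :: "'K::field set \<Rightarrow> bool" where
  "is_subfield k \<longleftrightarrow> 0 \<in> k \<and> 1 \<in> k \<and>
     (\<forall>a\<in>k. \<forall>b\<in>k. a + b \<in> k \<and> a - b \<in> k \<and> a * b \<in> k) \<and>
     (\<forall>a\<in>k. inverse a \<in> k)"

definition poly_over :: "'K::field set \<Rightarrow> 'K poly \<Rightarrow> bool" where
  "poly_over k P \<longleftrightarrow> (\<forall>i. coeff P i \<in> k)"

definition prime_subfield :: "'K::field set" where
  "prime_subfield = range (of_int :: int \<Rightarrow> 'K)"

definition alg_closed_subfield :: "'K::field set \<Rightarrow> bool" where
  "alg_closed_subfield k \<longleftrightarrow> is_subfield k \<and>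
     (\<forall>P. poly_over k P \<and> degree P \<ge> 1 \<longrightarrow> (\<exists>c\<in>k. poly P c = 0))"

definition algebraic_over :: "'K::field set \<Rightarrow> 'K \<Rightarrow> bool" where
  "algebraic_over F c \<longleftrightarrow> (\<exists>P. P \<noteq> 0 \<and> poly_over F P \<and> poly P c = 0)"

definition transcendental_over :: "'K::field set \<Rightarrow> 'K \<Rightarrow> bool" where
  "transcendental_over F c \<longleftrightarrow> \<not> algebraic_over F c"

inductive_set gen_field :: "'K::field set \<Rightarrow> 'K set" for S where
  base: "a \<in> S \<Longrightarrow> a \<in> gen_field S"
| zero: "0 \<in> gen_field S"
| one: "1 \<in> gen_field S"
| add: "a \<in> gen_field S \<Longrightarrow> b \<in> gen_field S \<Longrightarrow> a + b \<in> gen_field S"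
| uminus: "a \<in> gen_field S \<Longrightarrow> - a \<in> gen_field S"
| mult: "a \<in> gen_field S \<Longrightarrow> b \<in> gen_field S \<Longrightarrow> a * b \<in> gen_field S"
| inv: "a \<in> gen_field S \<Longrightarrow> inverse a \<in> gen_field S"

text \<open>'K is (a copy of) the function field \<open>\<bar>F_p(x,y)\<close> of the curve \<open>x^n + y^m = 1\<close>:
  it contains an algebraic closure \<open>k\<close> of the prime field \<open>F_p\<close>, \<open>x\<close> is transcendental
  over \<open>k\<close>, \<open>x^n + y^m = 1\<close>, and \<open>'K = k(x,y)\<close>.  (Note \<open>\<bar>F_q = \<bar>F_p\<close>.)\<close>
definition fermat_function_field ::
  "nat \<Rightarrow> nat \<Rightarrow> nat \<Rightarrow> 'K::field set \<Rightarrow> 'K \<Rightarrow> 'K \<Rightarrow> bool" where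
  "fermat_function_field p n m k x y \<longleftrightarrow>
     CHAR('K) = p \<and>
     alg_closed_subfield k \<and> (\<forall>c\<in>k. algebraic_over prime_subfield c) \<and>
     transcendental_over k x \<and>
     x ^ n + y ^ m = 1 \<and>
     gen_field (k \<union> {x, y}) = UNIV"

definition hasse_derivatives :: "'K::field set \<Rightarrow> 'K \<Rightarrow> (nat \<Rightarrow> 'K \<Rightarrow> 'K) \<Rightarrow> bool" where
  "hasse_derivatives k \<tau> D \<longleftrightarrow>
     (\<forall>f. D 0 f = f) \<and>
     (\<forall>i f g. D i (f + g) = D i f + D i g) \<and>
     (\<forall>i f g. D i (f * g) = (\<Sum>j\<le>i. D j f * D (i - j) g)) \<and>
     (\<forall>i c. i \<ge> 1 \<longrightarrow> c \<in> k \<longrightarrow> D i c = 0) \<and>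
     D 1 \<tau> = 1 \<and> (\<forall>i. i \<ge> 2 \<longrightarrow> D i \<tau> = 0)"

definition conic_monomials :: "'K::field \<Rightarrow> 'K \<Rightarrow> nat \<Rightarrow> 'K" where
  "conic_monomials x y j =
     [1, x, y, x\<^sup>2, x * y, y\<^sup>2] ! j"

definition conic_wronskian :: "(nat \<Rightarrow> 'K::field \<Rightarrow> 'K) \<Rightarrow> 'K \<Rightarrow> 'K \<Rightarrow> (nat \<Rightarrow> nat) \<Rightarrow> 'K" where
  "conic_wronskian D x y eps =
     det (mat 6 6 (\<lambda>(i, j). D (eps i) (conic_monomials x y j)))"

definition strictly_incr6 :: "(nat \<Rightarrow> nat) \<Rightarrow> bool" where
  "strictly_incr6 eps \<longleftrightarrow> (\<forall>i j. i < j \<longrightarrow> j < 6 \<longrightarrow> eps i < eps j)"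

definition lex_less6 :: "(nat \<Rightarrow> nat) \<Rightarrow> (nat \<Rightarrow> nat) \<Rightarrow> bool" where
  "lex_less6 a b \<longleftrightarrow> (\<exists>i<6. (\<forall>j<i. a j = b j) \<and> a i < b i)"

definition admissible_seq :: "(nat \<Rightarrow> 'K::field \<Rightarrow> 'K) \<Rightarrow> 'K \<Rightarrow> 'K \<Rightarrow> (nat \<Rightarrow> nat) \<Rightarrow> bool" where
  "admissible_seq D x y eps \<longleftrightarrow>
     strictly_incr6 eps \<and> conic_wronskian D x y eps \<noteq> 0"

text \<open>\<open>eps\<close> (only \<open>eps 0, ..., eps 5\<close> matter) is the order sequence w.r.t. conics:
  the lexicographically smallest admissible sequence.\<close>
definition conic_order_sequence :: "(nat \<Rightarrow> 'K::field \<Rightarrow> 'K) \<Rightarrow> 'K \<Rightarrow> 'K \<Rightarrow> (nat \<Rightarrow> nat) \<Rightarrow> bool" where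
  "conic_order_sequence D x y eps \<longleftrightarrow>
     admissible_seq D x y eps \<and>
     (\<forall>eps'. admissible_seq D x y eps' \<longrightarrow> \<not> lex_less6 eps' eps)"

definition nonclassical_conics :: "(nat \<Rightarrow> 'K::field \<Rightarrow> 'K) \<Rightarrow> 'K \<Rightarrow> 'K \<Rightarrow> bool" where
  "nonclassical_conics D x y \<longleftrightarrow>
     (\<exists>eps. conic_order_sequence D x y eps \<and> (\<exists>i<6. eps i \<noteq> i))"

end

theory Submission
  imports Defs
begin

(* Write d_i for the Hasse derivatives D_i y. Since 0 < 1 < ... < 5 is the lexicographically
   smallest candidate, nonclassicality forces the Wronskian of orders 0, ..., 5 to vanish, and
   column operations reduce it to a 3 x 3 minor Phi(d_1, ..., d_5) (conic_minor), homogeneous of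
   degree 4 and of weight 11. Differentiating y^m = 1 - x^n gives, for the truncated series
   P(t) = sum d_i t^i, the identity P (P^m)' = m P^m P'. After rescaling t by z = x (1 - x^n) and
   dividing by y, the coefficients h_i = d_i z^i / y are polynomials in S = x^n over the prime
   field, given by a recursion; hence Phi(h(S)) is a polynomial in S vanishing at the
   transcendental element x^n, so it is identically zero. At S = 1 the h_k are multiples of the
   binomial coefficients of 1/m, and their linear coefficients in S are -(n choose k)/m. For a
   binomial sequence with parameter L the minor is, up to a unit,
   L^4 (L - 1)^4 (2L - 1) (L + 1) (L - 2); as its set of nonzero roots {1/2, -1, 2, 1} is closed
   under inversion, both m and n are roots in characteristic p. *)

section \<open>Polynomials over a subfield and transcendence\<close>

context
  fixes k :: "'a::field set"
  assumes subfield: "is_subfield k"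
begin

lemma subfield_zero: "0 \<in> k" and subfield_one: "1 \<in> k"
  using subfield unfolding is_subfield_def by auto

lemma subfield_add: "a \<in> k \<Longrightarrow> b \<in> k \<Longrightarrow> a + b \<in> k"
  and subfield_diff: "a \<in> k \<Longrightarrow> b \<in> k \<Longrightarrow> a - b \<in> k"
  and subfield_mult: "a \<in> k \<Longrightarrow> b \<in> k \<Longrightarrow> a * b \<in> k"
  and subfield_inverse: "a \<in> k \<Longrightarrow> inverse a \<in> k"
  using subfield unfolding is_subfield_def by auto

lemma subfield_uminus: "a \<in> k \<Longrightarrow> - a \<in> k"
  using subfield_diff[OF subfield_zero, of a] by simp

lemma subfield_of_nat: "of_nat n \<in> k"
  by (induction n) (simp_all add: subfield_zero subfield_one subfield_add)

lemma subfield_sum: "(\<And>a. a \<in> A \<Longrightarrow> f a \<in> k) \<Longrightarrow> sum f A \<in> k"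
  by (induction A rule: infinite_finite_induct) (simp_all add: subfield_zero subfield_add)

lemma poly_overI: "(\<And>i. coeff p i \<in> k) \<Longrightarrow> poly_over k p"
  and poly_overD: "poly_over k p \<Longrightarrow> coeff p i \<in> k"
  unfolding poly_over_def by blast+

lemma poly_over_0: "poly_over k 0"
  by (rule poly_overI) (simp add: subfield_zero)

lemma poly_over_pCons: "a \<in> k \<Longrightarrow> poly_over k p \<Longrightarrow> poly_over k (pCons a p)"
  by (rule poly_overI) (auto simp: coeff_pCons subfield_zero poly_overD split: nat.splits)

lemma poly_over_pConsD: "poly_over k (pCons a p) \<Longrightarrow> a \<in> k \<and> poly_over k p"
  unfolding poly_over_def by (metis coeff_pCons_0 coeff_pCons_Suc)

lemma poly_over_1: "poly_over k 1"
  using poly_over_pCons[OF subfield_one poly_over_0] by (simp add: one_pCons)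

lemma poly_over_add: "poly_over k p \<Longrightarrow> poly_over k q \<Longrightarrow> poly_over k (p + q)"
  and poly_over_diff: "poly_over k p \<Longrightarrow> poly_over k q \<Longrightarrow> poly_over k (p - q)"
  by (rule poly_overI; simp add: subfield_add subfield_diff poly_overD)+

lemma poly_over_smult: "a \<in> k \<Longrightarrow> poly_over k p \<Longrightarrow> poly_over k (smult a p)"
  by (rule poly_overI) (simp add: subfield_mult poly_overD)

lemma poly_over_mult: "poly_over k p \<Longrightarrow> poly_over k q \<Longrightarrow> poly_over k (p * q)"
  by (rule poly_overI) (simp add: coeff_mult subfield_mult subfield_sum poly_overD)

lemma poly_over_power: "poly_over k p \<Longrightarrow> poly_over k (p ^ n)"
  by (induction n) (simp_all add: poly_over_1 poly_over_mult)

lemma poly_over_sum: "(\<And>a. a \<in> A \<Longrightarrow> poly_over k (f a)) \<Longrightarrow> poly_over k (sum f A)"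
  by (rule poly_overI) (simp add: coeff_sum subfield_sum poly_overD)

lemma poly_over_monom: "a \<in> k \<Longrightarrow> poly_over k (monom a n)"
  by (rule poly_overI) (simp add: coeff_monom subfield_zero)

lemma poly_over_pcompose:
  assumes "poly_over k q" shows "poly_over k p \<Longrightarrow> poly_over k (pcompose p q)"
proof (induction p rule: pCons_induct)
  case (pCons a p)
  then show ?case using poly_over_pConsD[OF pCons.prems] assms
    by (simp add: pcompose_pCons poly_over_add poly_over_mult poly_over_pCons poly_over_0)
qed (simp add: poly_over_0)

end

lemma transcendental_poly_eq_0:
  "transcendental_over k x \<Longrightarrow> poly_over k p \<Longrightarrow> poly p x = 0 \<Longrightarrow> p = 0"
  unfolding transcendental_over_def algebraic_over_def by blast

lemma transcendental_power_poly_eq_0: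
  assumes "is_subfield k" and "transcendental_over k x" and "n > 0"
    and "poly_over k p" and "poly p (x ^ n) = 0"
  shows "p = 0"
proof -
  have "pcompose p (monom 1 n) = 0"
    using assms by (intro transcendental_poly_eq_0[of k x])
      (auto intro: poly_over_pcompose poly_over_monom subfield_one simp: poly_pcompose poly_monom)
  then show ?thesis
    by (rule pcompose_eq_0) (use assms(3) in \<open>simp add: degree_monom_eq\<close>)
qed

lemma transcendental_power_add_neq_0:
  assumes "is_subfield k" and "transcendental_over k x" and "a \<in> k" and "n > 0"
  shows "x ^ n + a \<noteq> 0"
proof
  assume "x ^ n + a = 0"
  then have "[:a, 1:] = 0"
    using assms by (intro transcendental_power_poly_eq_0[OF assms(1,2,4)])
      (auto intro!: poly_over_pCons poly_over_0 subfield_one simp: add.commute)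
  then show False by simp
qed

section \<open>Hasse derivatives\<close>

lemma coeff_linear_power:
  "coeff ([:a, 1:] ^ n) i = of_nat (n choose i) * (a::'a::comm_ring_1) ^ (n - i)"
proof (cases "i \<le> n")
  case False
  then have "degree ([:a, 1:] ^ n) < i" by (simp add: degree_linear_power)
  then show ?thesis using False by (simp add: coeff_eq_0 binomial_eq_0)
qed (use coeff_linear_poly_power[of i n a 1] in simp)

definition hasse_series :: "(nat \<Rightarrow> 'a \<Rightarrow> 'a::comm_ring_1) \<Rightarrow> nat \<Rightarrow> 'a \<Rightarrow> 'a poly" where
  "hasse_series D N f = (\<Sum>i<N. monom (D i f) i)"

lemma coeff_hasse_series: "coeff (hasse_series D N f) i = (if i < N then D i f else 0)"
  unfolding hasse_series_def coeff_sum coeff_monom by (auto simp: sum.delta)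

context
  fixes k :: "'a::field set" and \<tau> :: 'a and D :: "nat \<Rightarrow> 'a \<Rightarrow> 'a"
  assumes hasse: "hasse_derivatives k \<tau> D"
begin

lemma hasse_D_0: "D 0 f = f"
  and hasse_D_add: "D i (f + g) = D i f + D i g"
  and hasse_D_mult: "D i (f * g) = (\<Sum>j\<le>i. D j f * D (i - j) g)"
  and hasse_D_const: "1 \<le> i \<Longrightarrow> c \<in> k \<Longrightarrow> D i c = 0"
  and hasse_D_tau: "D (Suc 0) \<tau> = 1" "2 \<le> i \<Longrightarrow> D i \<tau> = 0"
  using hasse unfolding hasse_derivatives_def by auto

lemma hasse_D_diff: "D i (f - g) = D i f - D i g"
  using hasse_D_add[of i "f - g" g] by simp

lemma hasse_D_one: "1 \<in> k \<Longrightarrow> D i 1 = (if i = 0 then 1 else 0)"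
  using hasse_D_0 hasse_D_const by simp

lemma hasse_D_tau_mult: "1 \<le> i \<Longrightarrow> D i (\<tau> * f) = \<tau> * D i f + D (i - 1) f"
proof -
  assume i: "1 \<le> i"
  have "D i (\<tau> * f) = (\<Sum>j\<le>i. (if j = 0 then \<tau> * D i f else 0) + (if j = 1 then D (i - 1) f else 0))"
    unfolding hasse_D_mult
    by (intro sum.cong) (auto simp: hasse_D_0 hasse_D_tau not_less_eq_eq[symmetric])
  then show ?thesis using i by (simp add: sum.distrib)
qed

lemma hasse_D_power_coeff:
  assumes "1 \<in> k" and "i < N"
  shows "D i (f ^ j) = coeff (hasse_series D N f ^ j) i"
  using assms(2)
proof (induction j arbitrary: i)
  case 0
  then show ?case using hasse_D_one[OF assms(1)] by simp
next
  case (Suc j)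
  have "D i (f ^ Suc j) = (\<Sum>l\<le>i. D l f * D (i - l) (f ^ j))"
    by (simp add: hasse_D_mult)
  also have "\<dots> = (\<Sum>l\<le>i. coeff (hasse_series D N f) l * coeff (hasse_series D N f ^ j) (i - l))"
    using Suc by (auto simp: coeff_hasse_series intro!: sum.cong)
  also have "\<dots> = coeff (hasse_series D N f ^ Suc j) i"
    by (simp add: coeff_mult)
  finally show ?case .
qed

lemma hasse_series_tau: "2 \<le> N \<Longrightarrow> hasse_series D N \<tau> = [:\<tau>, 1:]"
  by (rule poly_eqI)
    (auto simp: coeff_hasse_series coeff_pCons hasse_D_0 hasse_D_tau split: nat.splits)

lemma hasse_D_tau_power: "1 \<in> k \<Longrightarrow> D i (\<tau> ^ n) = of_nat (n choose i) * \<tau> ^ (n - i)"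
  using hasse_D_power_coeff[of i "i + 2" \<tau> n] by (simp add: hasse_series_tau coeff_linear_power)

end

section \<open>The Wronskian with respect to conics\<close>

lemma det_mat_single_entry_column:
  assumes j: "j < Suc n" and zero: "\<And>i. 0 < i \<Longrightarrow> i < Suc n \<Longrightarrow> f (i, j) = 0"
  shows "det (mat (Suc n) (Suc n) f)
    = f (0, j) * (-1) ^ j * det (mat n n (\<lambda>(a, b). f (Suc a, if b < j then b else Suc b)))"
proof -
  let ?A = "mat (Suc n) (Suc n) f"
  have "det ?A = (\<Sum>i<Suc n. ?A $$ (i, j) * cofactor ?A i j)"
    by (rule laplace_expansion_column[OF _ j]) simp
  also have "\<dots> = ?A $$ (0, j) * cofactor ?A 0 j"
    using zero j by (subst sum.lessThan_Suc_shift) (auto intro!: sum.neutral)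
  also have "mat_delete ?A 0 j = mat n n (\<lambda>(a, b). f (Suc a, if b < j then b else Suc b))"
    unfolding mat_delete_def using j by (intro eq_matI) auto
  then have "cofactor ?A 0 j
      = (-1) ^ j * det (mat n n (\<lambda>(a, b). f (Suc a, if b < j then b else Suc b)))"
    unfolding cofactor_def by simp
  finally show ?thesis using j by simp
qed

lemma det_mat_expand_first_column:
  "det (mat (Suc n) (Suc n) f) = (\<Sum>i<Suc n. f (i, 0) * (-1) ^ i *
     det (mat n n (\<lambda>(a, b). f (if a < i then a else Suc a, Suc b))))"
proof -
  let ?A = "mat (Suc n) (Suc n) f"
  have "det ?A = (\<Sum>i<Suc n. ?A $$ (i, 0) * cofactor ?A i 0)"
    by (rule laplace_expansion_column) simp_all
  also have "\<dots> = (\<Sum>i<Suc n. f (i, 0) * (-1) ^ i *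
     det (mat n n (\<lambda>(a, b). f (if a < i then a else Suc a, Suc b))))"
  proof (rule sum.cong[OF refl])
    fix i assume i: "i \<in> {..<Suc n}"
    have "mat_delete ?A i 0 = mat n n (\<lambda>(a, b). f (if a < i then a else Suc a, Suc b))"
      unfolding mat_delete_def using i by (intro eq_matI) auto
    then show "?A $$ (i, 0) * cofactor ?A i 0
      = f (i, 0) * (-1) ^ i * det (mat n n (\<lambda>(a, b). f (if a < i then a else Suc a, Suc b)))"
      unfolding cofactor_def using i by simp
  qed
  finally show ?thesis .
qed

lemma det_mat_3:
  "det (mat 3 3 f) = f (0, 0) * (f (1, 1) * f (2, 2) - f (2, 1) * f (1, 2))
     - f (1, 0) * (f (0, 1) * f (2, 2) - f (2, 1) * f (0, 2))
     + f (2, 0) * (f (0, 1) * f (1, 2) - f (1, 1) * f (0, 2))"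
proof -
  have det1: "det (mat (Suc 0) (Suc 0) g) = g (0, 0)" for g :: "nat \<times> nat \<Rightarrow> 'a"
    by (subst det_mat_expand_first_column) simp
  have det2: "det (mat (Suc (Suc 0)) (Suc (Suc 0)) g) = g (0, 0) * g (1, 1) - g (1, 0) * g (0, 1)"
    for g :: "nat \<times> nat \<Rightarrow> 'a"
    by (subst det_mat_expand_first_column) (simp add: det1 lessThan_Suc)
  show ?thesis
    by (simp only: numeral_3_eq_3, subst det_mat_expand_first_column)
      (simp add: det2 lessThan_Suc algebra_simps numeral_2_eq_2)
qed

lemma det_mat_6_three_unit_columns:
  fixes F :: "nat \<times> nat \<Rightarrow> 'a::comm_ring_1"
  assumes "F (0, 0) = 1" "\<And>i. 0 < i \<Longrightarrow> i < 6 \<Longrightarrow> F (i, 0) = 0"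
    "F (1, 1) = 1" "\<And>i. 1 < i \<Longrightarrow> i < 6 \<Longrightarrow> F (i, 1) = 0"
    "F (2, 3) = 1" "\<And>i. 2 < i \<Longrightarrow> i < 6 \<Longrightarrow> F (i, 3) = 0"
  shows "det (mat 6 6 F) = - det (mat 3 3 (\<lambda>(i, j). F (i + 3, [2, 4, 5] ! j)))"
proof -
  have "det (mat 6 6 F) = det (mat (Suc 5) (Suc 5) F)" by simp
  also have "\<dots> = det (mat 5 5 (\<lambda>(a, b). F (Suc a, Suc b)))"
    by (subst det_mat_single_entry_column[of 0]) (use assms in auto)
  also have "\<dots> = det (mat (Suc 4) (Suc 4) (\<lambda>(a, b). F (Suc a, Suc b)))" by simp
  also have "\<dots> = det (mat 4 4 (\<lambda>(a, b). F (Suc (Suc a), Suc (Suc b))))"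
    by (subst det_mat_single_entry_column[of 0]) (use assms in auto)
  also have "\<dots> = det (mat (Suc 3) (Suc 3) (\<lambda>(a, b). F (Suc (Suc a), Suc (Suc b))))" by simp
  also have "\<dots> = - det (mat 3 3 (\<lambda>(a, b).
      F (Suc (Suc (Suc a)), Suc (Suc (if b < 1 then b else Suc b)))))"
    by (subst det_mat_single_entry_column[of 1]) (use assms in \<open>auto simp: numeral_eq_Suc\<close>)
  also have "\<dots> = - det (mat 3 3 (\<lambda>(i, j). F (i + 3, [2, 4, 5] ! j)))"
    by (simp only: det_mat_3) (simp add: eval_nat_numeral)
  finally show ?thesis .
qed

definition conic_minor :: "(nat \<Rightarrow> 'a::comm_ring_1) \<Rightarrow> 'a" where
  "conic_minor h = det (mat 3 3 (\<lambda>(i, j).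
     [h (i + 3), h (i + 2), \<Sum>l\<in>{1..i + 2}. h l * h (i + 3 - l)] ! j))"

lemma conic_minor_explicit:
  "conic_minor h
    = h 3 * (h 3 * (2 * h 1 * h 4 + 2 * h 2 * h 3) - h 4 * (2 * h 1 * h 3 + h 2 ^ 2))
    - h 4 * (h 2 * (2 * h 1 * h 4 + 2 * h 2 * h 3) - h 4 * (2 * h 1 * h 2))
    + h 5 * (h 2 * (2 * h 1 * h 3 + h 2 ^ 2) - h 3 * (2 * h 1 * h 2))"
  unfolding conic_minor_def det_mat_3
  by (simp add: eval_nat_numeral atLeastAtMostSuc_conv algebra_simps)

lemma conic_minor_cong: "(\<And>i. 1 \<le> i \<Longrightarrow> i \<le> 5 \<Longrightarrow> f i = g i) \<Longrightarrow> conic_minor f = conic_minor g"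
  unfolding conic_minor_explicit by simp

lemma conic_minor_scale: "conic_minor (\<lambda>i. t * u ^ i * f i) = t ^ 4 * u ^ 11 * conic_minor f"
  unfolding conic_minor_explicit by (simp add: algebra_simps eval_nat_numeral)

lemma poly_conic_minor: "poly (conic_minor p) s = conic_minor (\<lambda>i. poly (p i) s)"
  unfolding conic_minor_explicit by simp

lemma poly_over_conic_minor:
  "is_subfield k \<Longrightarrow> (\<And>i. poly_over k (p i)) \<Longrightarrow> poly_over k (conic_minor p)"
  unfolding conic_minor_explicit mult_2 power2_eq_square
  by (intro poly_over_add poly_over_diff poly_over_mult)

(* The columns of 1, x and x^2 are unit vectors up to triangular shape; in the remaining minor,
   subtracting x times the column of y from that of x y, and 2 y times it from that of y^2,
   removes both x and D_0 y. *)
lemma conic_wronskian_classical: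
  assumes "hasse_derivatives k x D" and "1 \<in> k"
  shows "conic_wronskian D x y (\<lambda>i. i) = - conic_minor (\<lambda>i. D i y)"
proof -
  define F where "F = (\<lambda>(i, j). D i (conic_monomials x y j))"
  have monomials: "conic_monomials x y 0 = 1" "conic_monomials x y (Suc 0) = x"
    "conic_monomials x y 2 = y"
    "conic_monomials x y 3 = x ^ 2" "conic_monomials x y 4 = x * y" "conic_monomials x y 5 = y ^ 2"
    by (simp_all add: conic_monomials_def)
  note D = hasse_D_0[OF assms(1)] hasse_D_one[OF assms] hasse_D_tau[OF assms(1)]
    hasse_D_tau_mult[OF assms(1)]
  have "conic_wronskian D x y (\<lambda>i. i) = det (mat 6 6 F)"
    unfolding conic_wronskian_def F_def by simp
  also have "\<dots> = - det (mat 3 3 (\<lambda>(i, j). F (i + 3, [2, 4, 5] ! j)))"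
    by (rule det_mat_6_three_unit_columns) (auto simp: F_def monomials D power2_eq_square)
  also have "\<dots> = - conic_minor (\<lambda>i. D i y)"
  proof -
    have col2: "F (i, 2) = D i y" for i
      by (simp add: F_def monomials)
    have col4: "F (i, 4) = x * D i y + D (i - 1) y" if "1 \<le> i" for i
      using that by (simp add: F_def monomials D)
    have col5: "F (i, 5) = (\<Sum>j\<le>i. D j y * D (i - j) y)" for i
      by (simp add: F_def monomials power2_eq_square hasse_D_mult[OF assms(1)])
    show ?thesis
      unfolding det_mat_3 conic_minor_explicit
      by (simp add: col2 col4 col5 atMost_nat_numeral power2_eq_square algebra_simps)
  qed
  finally show ?thesis .
qed

lemma nonclassical_conics_wronskian_eq_0:
  assumes "nonclassical_conics D x y"
  shows "conic_wronskian D x y (\<lambda>i. i) = 0"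
proof (rule ccontr)
  assume "conic_wronskian D x y (\<lambda>i. i) \<noteq> 0"
  then have admissible: "admissible_seq D x y (\<lambda>i. i)"
    unfolding admissible_seq_def strictly_incr6_def by auto
  obtain eps i0 where order: "conic_order_sequence D x y eps" and i0: "i0 < 6" "eps i0 \<noteq> i0"
    using assms unfolding nonclassical_conics_def by blast
  have incr: "strictly_incr6 eps"
    using order unfolding conic_order_sequence_def admissible_seq_def by blast
  have ge: "i < 6 \<Longrightarrow> i \<le> eps i" for i
  proof (induction i)
    case (Suc i)
    then have "eps i < eps (Suc i)" using incr unfolding strictly_incr6_def by simp
    with Suc show ?case by simp
  qed simp
  define i1 where "i1 = (LEAST i. i < 6 \<and> eps i \<noteq> i)"
  have i1: "i1 < 6" "eps i1 \<noteq> i1"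
    using LeastI[of "\<lambda>i. i < 6 \<and> eps i \<noteq> i" i0] i0 unfolding i1_def by auto
  have "eps j = j" if "j < i1" for j
    using not_less_Least[OF that[unfolded i1_def]] that i1 by auto
  then have "lex_less6 (\<lambda>i. i) eps"
    unfolding lex_less6_def using i1 ge[of i1] by (intro exI[of _ i1]) auto
  then show False
    using order admissible unfolding conic_order_sequence_def by blast
qed

section \<open>The recursion for the normalised Hasse derivatives\<close>

lemma mult_pderiv_power: "p * pderiv (p ^ m) = smult (of_nat m) (p ^ m * pderiv p)"
proof (cases m)
  case (Suc j)
  show ?thesis by (simp only: Suc pderiv_power_Suc) (simp add: algebra_simps)
qed simp

lemma log_identity_rescale:
  fixes p q :: "'a::field poly"
  assumes "p * pderiv q = smult c (q * pderiv p)"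
  shows "smult a (pcompose p (monom z 1)) * pderiv (smult b (pcompose q (monom z 1)))
       = smult c (smult b (pcompose q (monom z 1)) * pderiv (smult a (pcompose p (monom z 1))))"
proof -
  have d: "pderiv (pcompose f (monom z 1)) = smult z (pcompose (pderiv f) (monom z 1))"
    for f :: "'a poly"
    by (simp add: pderiv_pcompose pderiv_monom monom_0)
  have "smult a (pcompose p (monom z 1)) * pderiv (smult b (pcompose q (monom z 1)))
      = smult (a * b * z) (pcompose (p * pderiv q) (monom z 1))"
    by (simp only: pderiv_smult d) (simp add: pcompose_mult mult.commute mult.left_commute)
  also have "\<dots> = smult (a * b * z * c) (pcompose (q * pderiv p) (monom z 1))"
    by (simp add: assms pcompose_smult)
  also have "\<dots>
      = smult c (smult b (pcompose q (monom z 1)) * pderiv (smult a (pcompose p (monom z 1))))"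
    by (simp only: pderiv_smult d) (simp add: pcompose_mult mult.commute mult.left_commute)
  finally show ?thesis .
qed

lemma coeff_mult_Suc_0:
  "coeff (p * q) (Suc 0) = coeff p 0 * coeff q (Suc 0) + coeff p (Suc 0) * coeff q 0"
  by (simp add: coeff_mult)

(* The coefficient of t^k in H R' - M R H', with the term -(k + 1) M h_(k+1) rho_0 left out. *)
definition log_recurrence_rhs :: "'a::comm_ring_1 \<Rightarrow> (nat \<Rightarrow> 'a) \<Rightarrow> (nat \<Rightarrow> 'a) \<Rightarrow> nat \<Rightarrow> 'a" where
  "log_recurrence_rhs M h \<rho> k = (\<Sum>i\<le>k. h i * of_nat (Suc (k - i)) * \<rho> (Suc (k - i)))
     - M * (\<Sum>i\<in>{1..k}. \<rho> i * of_nat (Suc (k - i)) * h (Suc (k - i)))"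

lemma log_recurrence_rhs_cong [fundef_cong]:
  "M = M' \<Longrightarrow> k = k' \<Longrightarrow> (\<And>i. i \<le> k' \<Longrightarrow> h i = h' i) \<Longrightarrow> (\<And>i. i \<le> Suc k' \<Longrightarrow> \<rho> i = \<rho>' i)
    \<Longrightarrow> log_recurrence_rhs M h \<rho> k = log_recurrence_rhs M' h' \<rho>' k'"
  unfolding log_recurrence_rhs_def
  by (intro arg_cong2[where f = minus] arg_cong2[where f = times] sum.cong) auto

lemma poly_log_recurrence_rhs:
  "poly (log_recurrence_rhs [:M:] h \<rho> k) s
    = log_recurrence_rhs M (\<lambda>i. poly (h i) s) (\<lambda>i. poly (\<rho> i) s) k"
  by (simp add: log_recurrence_rhs_def poly_sum)

lemma coeff_log_identity_recurrence:
  fixes H R :: "'a::idom poly"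
  assumes "H * pderiv R = smult M (R * pderiv H)" and "coeff R 0 = 1"
  shows "of_nat (Suc k) * M * coeff H (Suc k) = log_recurrence_rhs M (coeff H) (coeff R) k"
proof -
  have "(\<Sum>i\<le>k. coeff H i * of_nat (Suc (k - i)) * coeff R (Suc (k - i)))
      = M * (\<Sum>i\<le>k. coeff R i * of_nat (Suc (k - i)) * coeff H (Suc (k - i)))"
    using arg_cong[OF assms(1), of "\<lambda>p. coeff p k"]
    by (simp add: coeff_mult coeff_pderiv mult.assoc del: of_nat_Suc)
  moreover have "(\<Sum>i\<le>k. coeff R i * of_nat (Suc (k - i)) * coeff H (Suc (k - i)))
      = of_nat (Suc k) * coeff H (Suc k)
        + (\<Sum>i\<in>{1..k}. coeff R i * of_nat (Suc (k - i)) * coeff H (Suc (k - i)))"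
  proof -
    have "{..k} = insert 0 {1..k}" by auto
    then show ?thesis using assms(2) by (simp del: of_nat_Suc)
  qed
  ultimately show ?thesis by (simp add: log_recurrence_rhs_def algebra_simps del: of_nat_Suc)
qed

(* rho_j(S) = - c_j S (1 - S)^(j - 1): with c_j = n choose j, the coefficients of
   (1 - (x + z t)^n) / (1 - x^n) for z = x (1 - x^n), written in S = x^n. *)
definition rho_poly :: "(nat \<Rightarrow> 'a::comm_ring_1) \<Rightarrow> nat \<Rightarrow> 'a poly" where
  "rho_poly c j = (if j = 0 then 1 else smult (- c j) ([:0, 1:] * [:1, -1:] ^ (j - 1)))"

(* The normalised Hasse derivatives h_k = D_k(y) z^k / y as polynomials in S = x^n. *)
function h_poly :: "(nat \<Rightarrow> 'a::field) \<Rightarrow> 'a \<Rightarrow> nat \<Rightarrow> 'a poly" where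
  "h_poly c M 0 = 1"
| "h_poly c M (Suc k) =
     smult (inverse (of_nat (Suc k) * M)) (log_recurrence_rhs [:M:] (h_poly c M) (rho_poly c) k)"
  by pat_completeness auto
termination by (relation "measure (\<lambda>(c, M, k). k)") auto

(* Together with log_recurrence_rhs_def this equation would make the simplifier loop. *)
declare h_poly.simps(2) [simp del]

lemma poly_h_poly:
  fixes H R :: "'a::field poly"
  assumes log_identity: "H * pderiv R = smult M (R * pderiv H)" and "coeff H 0 = 1"
    and rho: "\<And>j. j \<le> K \<Longrightarrow> coeff R j = poly (rho_poly c j) s"
    and nonzero: "\<And>j. 0 < j \<Longrightarrow> j \<le> K \<Longrightarrow> of_nat j * M \<noteq> 0"
  shows "poly (h_poly c M K) s = coeff H K"
proof -
  have "poly (h_poly c M K') s = coeff H K'" if "K' \<le> K" for K'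
    using that
  proof (induction K' rule: less_induct)
    case (less K')
    show ?case
    proof (cases K')
      case 0
      then show ?thesis using \<open>coeff H 0 = 1\<close> by simp
    next
      case (Suc k)
      have R0: "coeff R 0 = 1" using rho[of 0] by (simp add: rho_poly_def)
      have "poly (h_poly c M K') s
          = inverse (of_nat (Suc k) * M) * log_recurrence_rhs M (coeff H) (coeff R) k"
        unfolding Suc h_poly.simps poly_smult poly_log_recurrence_rhs
        using less Suc
        by (intro arg_cong[where f = "(*) _"] log_recurrence_rhs_cong) (simp_all add: rho)
      also have "\<dots> = coeff H K'"
        using coeff_log_identity_recurrence[OF log_identity R0, of k] nonzero[of K'] less.prems Suc
        by (simp add: field_simps del: of_nat_Suc)
      finally show ?thesis .
    qed
  qed
  then show ?thesis by simp
qed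

lemma poly_rho_poly_at_0: "poly (rho_poly c j) 0 = (if j = 0 then 1 else 0)"
  by (simp add: rho_poly_def)

lemma poly_rho_poly_at_1:
  "poly (rho_poly c j) 1 = (if j = 0 then 1 else if j = 1 then - c 1 else 0)"
  by (cases j) (auto simp: rho_poly_def power_0_left)

lemma coeff_rho_poly_1: "0 < j \<Longrightarrow> coeff (rho_poly c j) 1 = - c j"
  by (simp add: rho_poly_def coeff_mult_Suc_0 coeff_0_power)

lemma poly_h_poly_at_0: "poly (h_poly c M K) 0 = (if K = 0 then 1 else 0)"
proof (cases K)
  case (Suc k)
  show ?thesis unfolding Suc h_poly.simps(2)
    by (simp add: log_recurrence_rhs_def poly_sum poly_rho_poly_at_0)
qed simp

lemma coeff_h_poly_Suc_1:
  assumes "of_nat (Suc k) * M \<noteq> 0"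
  shows "coeff (h_poly c M (Suc k)) 1 = - c (Suc k) / M"
proof -
  have h0: "coeff (h_poly c M i) 0 = (if i = 0 then 1 else 0)" for i
    using poly_h_poly_at_0[of c M i] by (simp add: poly_0_coeff_0)
  have rho0: "coeff (rho_poly c j) 0 = (if j = 0 then 1 else 0)" for j
    using poly_rho_poly_at_0[of c j] by (simp add: poly_0_coeff_0)
  have "{..k} = insert 0 {1..k}" by auto
  then have "coeff (log_recurrence_rhs [:M:] (h_poly c M) (rho_poly c) k) 1
      = of_nat (Suc k) * - c (Suc k)"
    unfolding log_recurrence_rhs_def
    by (simp add: coeff_sum coeff_mult_Suc_0 of_nat_poly h0 rho0 coeff_rho_poly_1[simplified]
        del: of_nat_Suc)
  then show ?thesis
    using assms by (simp add: h_poly.simps(2) field_simps del: of_nat_Suc)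
qed

lemma poly_h_poly_Suc_at_1:
  assumes "of_nat (Suc k) * M \<noteq> 0"
  shows "of_nat (Suc k) * poly (h_poly c M (Suc k)) 1
    = - c 1 * (inverse M - of_nat k) * poly (h_poly c M k) 1"
proof -
  have "log_recurrence_rhs M (\<lambda>i. poly (h_poly c M i) 1) (\<lambda>j. poly (rho_poly c j) 1) k
      = - c 1 * (1 - M * of_nat k) * poly (h_poly c M k) 1"
  proof -
    have "{..k} = insert k {..<k}" "{1..k} = (if k = 0 then {} else insert 1 {2..k})" by auto
    then show ?thesis
      by (simp add: log_recurrence_rhs_def poly_rho_poly_at_1 algebra_simps)
  qed
  then show ?thesis
    using assms by (simp add: h_poly.simps(2) poly_log_recurrence_rhs field_simps del: of_nat_Suc)
qed

lemma poly_over_rho_poly: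
  assumes "is_subfield k" and "c j \<in> k"
  shows "poly_over k (rho_poly c j)"
proof (cases "j = 0")
  case False
  then show ?thesis unfolding rho_poly_def if_not_P[OF False] using assms
    by (intro poly_over_smult subfield_uminus poly_over_mult poly_over_power poly_over_pCons
        subfield_zero subfield_one poly_over_0)
qed (simp add: rho_poly_def poly_over_1 assms)

lemma poly_over_h_poly:
  assumes "is_subfield k" and "\<And>j. c j \<in> k" and "M \<in> k"
  shows "poly_over k (h_poly c M K)"
proof (induction K rule: less_induct)
  case (less K)
  show ?case
  proof (cases K)
    case 0
    then show ?thesis using poly_over_1[OF assms(1)] by simp
  next
    case (Suc k')
    then show ?thesis
      using less assms unfolding Suc h_poly.simps(2) unfolding log_recurrence_rhs_def of_nat_poly
      by (intro poly_over_smult poly_over_diff poly_over_sum poly_over_mult poly_over_rho_poly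
          poly_over_pCons poly_over_0 subfield_inverse subfield_mult subfield_of_nat) auto
  qed
qed

section \<open>Binomial sequences and the minor\<close>

lemma of_nat_Suc_mult_binomial_Suc:
  "of_nat (Suc j) * (of_nat (n choose Suc j) :: 'a::comm_ring_1)
    = (of_nat n - of_nat j) * of_nat (n choose j)"
proof (cases "j \<le> n")
  case True
  have "Suc j * (n choose Suc j) = (n - j) * (n choose j)"
    using binomial_absorption[of j n] binomial_absorb_comp[of n j] by simp
  then have "(of_nat (Suc j * (n choose Suc j)) :: 'a) = of_nat ((n - j) * (n choose j))" by simp
  then show ?thesis using True by (simp only: of_nat_mult of_nat_diff)
qed (simp add: binomial_eq_0)

lemma fact_mult_binomial_sequence:
  fixes a :: "nat \<Rightarrow> 'a::comm_ring_1"
  assumes "a 1 = u * L"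
    and "\<And>k. 1 \<le> k \<Longrightarrow> k < K \<Longrightarrow> of_nat (Suc k) * a (Suc k) = u * (L - of_nat k) * a k"
  shows "1 \<le> i \<Longrightarrow> i \<le> K \<Longrightarrow> of_nat (fact i) * a i = u ^ i * (\<Prod>j<i. L - of_nat j)"
proof (induction i rule: nat_induct_at_least)
  case base
  then show ?case using assms(1) by simp
next
  case (Suc i)
  have IH: "of_nat (fact i) * a i = u ^ i * (\<Prod>j<i. L - of_nat j)"
    using Suc by simp
  have rec: "of_nat (Suc i) * a (Suc i) = u * (L - of_nat i) * a i"
    using assms(2) Suc by simp
  have "of_nat (fact (Suc i)) * a (Suc i) = of_nat (fact i) * (of_nat (Suc i) * a (Suc i))"
    by (simp add: algebra_simps)
  also have "\<dots> = u * (L - of_nat i) * (of_nat (fact i) * a i)"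
    unfolding rec by (simp add: algebra_simps)
  also have "\<dots> = u ^ Suc i * (\<Prod>j<Suc i. L - of_nat j)"
    unfolding IH by (simp add: algebra_simps)
  finally show ?case .
qed

lemma conic_minor_falling_factorials:
  fixes L :: "'a::comm_ring_1"
  shows "conic_minor (\<lambda>i. of_nat (120 div fact i) * (\<Prod>j<i. L - of_nat j))
    = 48000 * L ^ 4 * (L - 1) ^ 4 * (L + 1) * (L - 2) * (2 * L - 1)"
proof -
  have "(120::nat) div fact 1 = 120" "(120::nat) div fact 2 = 60" "(120::nat) div fact 3 = 20"
    "(120::nat) div fact 4 = 5" "(120::nat) div fact 5 = 1"
    by (simp_all add: fact_numeral)
  then have falling: "of_nat (120 div fact 1) * (\<Prod>j<1. L - of_nat j) = 120 * L"
    "of_nat (120 div fact 2) * (\<Prod>j<2. L - of_nat j) = 60 * L * (L - 1)"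
    "of_nat (120 div fact 3) * (\<Prod>j<3. L - of_nat j) = 20 * L * (L - 1) * (L - 2)"
    "of_nat (120 div fact 4) * (\<Prod>j<4. L - of_nat j) = 5 * L * (L - 1) * (L - 2) * (L - 3)"
    "of_nat (120 div fact 5) * (\<Prod>j<5. L - of_nat j) = L * (L - 1) * (L - 2) * (L - 3) * (L - 4)"
    by (simp_all add: lessThan_nat_numeral algebra_simps)
  show ?thesis
    unfolding conic_minor_explicit falling by (simp add: algebra_simps eval_nat_numeral)
qed

lemma conic_minor_binomial_sequence:
  fixes a :: "nat \<Rightarrow> 'a::comm_ring_1"
  assumes "a 1 = u * L"
    and "\<And>k. 1 \<le> k \<Longrightarrow> k \<le> 4 \<Longrightarrow> of_nat (Suc k) * a (Suc k) = u * (L - of_nat k) * a k"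
  shows "120 ^ 4 * conic_minor a
    = 48000 * u ^ 11 * L ^ 4 * (L - 1) ^ 4 * (L + 1) * (L - 2) * (2 * L - 1)"
proof -
  have "120 ^ 4 * conic_minor a = conic_minor (\<lambda>i. 120 * a i)"
    using conic_minor_scale[of 120 1 a] by simp
  also have "\<dots> = conic_minor (\<lambda>i. 1 * u ^ i * (of_nat (120 div fact i) * (\<Prod>j<i. L - of_nat j)))"
  proof (rule conic_minor_cong)
    fix i :: nat assume i: "1 \<le> i" "i \<le> 5"
    have "fact i dvd (fact 5 :: nat)" using i by (simp add: fact_dvd)
    then have "of_nat (120 div fact i) * (of_nat (fact i) :: 'a) = 120"
      by (simp add: of_nat_mult[symmetric] fact_numeral del: of_nat_mult)
    then have "120 * a i = of_nat (120 div fact i) * (of_nat (fact i) * a i)"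
      by (metis mult.assoc)
    also have "\<dots> = of_nat (120 div fact i) * (u ^ i * (\<Prod>j<i. L - of_nat j))"
      using fact_mult_binomial_sequence[of a u L 5 i] assms i by simp
    finally show "120 * a i = 1 * u ^ i * (of_nat (120 div fact i) * (\<Prod>j<i. L - of_nat j))"
      by (simp add: ac_simps)
  qed
  also have "\<dots> = 48000 * u ^ 11 * L ^ 4 * (L - 1) ^ 4 * (L + 1) * (L - 2) * (2 * L - 1)"
    using conic_minor_scale[of 1 u] conic_minor_falling_factorials[of L] by simp
  finally show ?thesis .
qed

lemma of_nat_nonzero_if_120_nonzero:
  assumes "(120::'a::field) \<noteq> 0" and "0 < j" and "j \<le> 5"
  shows "(of_nat j :: 'a) \<noteq> 0"
proof
  assume j: "(of_nat j :: 'a) = 0"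
  have "j = 1 \<or> j = 2 \<or> j = 3 \<or> j = 4 \<or> j = 5" using assms(2,3) by auto
  then have "j dvd 120" by auto
  then have "(120::'a) = of_nat j * of_nat (120 div j)"
    by (metis dvd_mult_div_cancel of_nat_mult of_nat_numeral)
  with j assms(1) show False by simp
qed

lemma numeral_48000_nonzero:
  assumes "(120::'a::field) \<noteq> 0"
  shows "(48000::'a) \<noteq> 0"
proof -
  have "(120::'a) = 20 * 6" and product: "(48000::'a) = 120 * 20 * 20" by simp_all
  then have "(20::'a) \<noteq> 0" using assms by (metis mult_zero_left)
  then show ?thesis using assms product by (metis mult_eq_0_iff)
qed

definition exceptional_value :: "'a::comm_ring_1 \<Rightarrow> bool" where
  "exceptional_value L \<longleftrightarrow> (2 * L - 1) * (L + 1) * (L - 2) * (L - 1) = 0"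

lemma exceptional_value_of_binomial_sequence:
  fixes a :: "nat \<Rightarrow> 'a::field"
  assumes "conic_minor a = 0" and "(120::'a) \<noteq> 0" and "u \<noteq> 0" and "L \<noteq> 0" and "a 1 = u * L"
    and "\<And>k. 1 \<le> k \<Longrightarrow> k \<le> 4 \<Longrightarrow> of_nat (Suc k) * a (Suc k) = u * (L - of_nat k) * a k"
  shows "exceptional_value L"
  using conic_minor_binomial_sequence[of a u L] assms numeral_48000_nonzero[OF assms(2)]
  unfolding exceptional_value_def by auto

lemma exceptional_value_inverse:
  fixes M :: "'a::field"
  assumes "M \<noteq> 0" and "exceptional_value (inverse M)"
  shows "exceptional_value M"
proof -
  have "(2 * inverse M - 1) * (inverse M + 1) * (inverse M - 2) * (inverse M - 1)
      = - ((2 * M - 1) * (M + 1) * (M - 2) * (M - 1)) / M ^ 4"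
    using assms(1) by (simp add: field_simps eval_nat_numeral)
  then show ?thesis using assms unfolding exceptional_value_def by simp
qed

lemma exceptional_value_of_nat_iff:
  assumes "2 \<le> n"
  shows "exceptional_value (of_nat n :: 'a::comm_ring_1)
    \<longleftrightarrow> CHAR('a) dvd (2 * n - 1) * (n + 1) * (n - 2) * (n - 1)"
proof -
  have "of_nat (2 * n - 1) = 2 * of_nat n - (1::'a)" "of_nat (n - 2) = of_nat n - (2::'a)"
    "of_nat (n - 1) = of_nat n - (1::'a)"
    using assms by (simp_all add: of_nat_diff)
  then show ?thesis
    unfolding exceptional_value_def of_nat_eq_0_iff_char_dvd[symmetric]
    by (simp only: of_nat_mult of_nat_add of_nat_1)
qed

section \<open>The Fermat curve\<close>

lemma rescaled_hasse_D_one_minus_power: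
  fixes x :: "'a::field"
  assumes hasse: "hasse_derivatives k x D" and one: "1 \<in> k" and w: "1 - x ^ n \<noteq> 0"
  shows "inverse (1 - x ^ n) * (x * (1 - x ^ n)) ^ j * D j (1 - x ^ n)
    = poly (rho_poly (\<lambda>j. of_nat (n choose j)) j) (x ^ n)"
proof (cases j)
  case 0
  then show ?thesis using w by (simp add: rho_poly_def hasse_D_0[OF hasse])
next
  case (Suc j')
  have binomial: "of_nat (n choose j) * x ^ (n - j) * x ^ j = of_nat (n choose j) * x ^ n"
    by (cases "j \<le> n") (simp_all add: power_add[symmetric] binomial_eq_0)
  have scale: "inverse (1 - x ^ n) * (x * (1 - x ^ n)) ^ j = x ^ j * (1 - x ^ n) ^ j'"
    using w unfolding Suc by (simp add: power_mult_distrib)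
  have "D j (1 - x ^ n) = - (of_nat (n choose j) * x ^ (n - j))"
    using Suc
    by (simp add: hasse_D_diff[OF hasse] hasse_D_one[OF hasse one] hasse_D_tau_power[OF hasse one])
  then have "inverse (1 - x ^ n) * (x * (1 - x ^ n)) ^ j * D j (1 - x ^ n)
      = - (of_nat (n choose j) * x ^ (n - j) * x ^ j) * (1 - x ^ n) ^ j'"
    unfolding scale by (simp add: algebra_simps)
  also have "\<dots> = poly (rho_poly (\<lambda>j. of_nat (n choose j)) j) (x ^ n)"
    unfolding binomial unfolding Suc by (simp add: rho_poly_def algebra_simps)
  finally show ?thesis .
qed

lemma fermat_normalized_series:
  fixes x y :: "'a::field"
  assumes hasse: "hasse_derivatives k x D" and one: "1 \<in> k"
    and curve: "y ^ m = 1 - x ^ n" and "x \<noteq> 0" and "x ^ n \<noteq> 1" and "y \<noteq> 0"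
  obtains H R :: "'a poly" where "H * pderiv R = smult (of_nat m) (R * pderiv H)"
    and "coeff H 0 = 1" and "\<And>i. i < 6 \<Longrightarrow> D i y = y * inverse (x * (1 - x ^ n)) ^ i * coeff H i"
    and "\<And>j. j < 6 \<Longrightarrow> coeff R j = poly (rho_poly (\<lambda>j. of_nat (n choose j)) j) (x ^ n)"
proof -
  define z where "z = x * (1 - x ^ n)"
  define P where "P = hasse_series D 6 y"
  define H where "H = smult (inverse y) (pcompose P (monom z 1))"
  define R where "R = smult (inverse (1 - x ^ n)) (pcompose (P ^ m) (monom z 1))"
  have z: "z \<noteq> 0" using assms(4,5) unfolding z_def by simp
  have coeff_H: "coeff H i = inverse y * z ^ i * D i y" if "i < 6" for i
    unfolding H_def P_def using that by (simp add: coeff_hasse_series)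
  have "coeff R j = poly (rho_poly (\<lambda>j. of_nat (n choose j)) j) (x ^ n)" if "j < 6" for j
  proof -
    have "coeff R j = inverse (1 - x ^ n) * z ^ j * D j (y ^ m)"
      unfolding R_def P_def using hasse_D_power_coeff[OF hasse one that] by simp
    then show ?thesis
      using rescaled_hasse_D_one_minus_power[OF hasse one, of n j] assms(5)
      unfolding curve z_def by simp
  qed
  moreover have "H * pderiv R = smult (of_nat m) (R * pderiv H)"
    unfolding H_def R_def by (rule log_identity_rescale[OF mult_pderiv_power])
  moreover have "coeff H 0 = 1"
    using coeff_H[of 0] hasse_D_0[OF hasse] assms(6) by simp
  moreover have "D i y = y * inverse (x * (1 - x ^ n)) ^ i * coeff H i" if "i < 6" for i
    using coeff_H[OF that] assms(6) z unfolding z_def by (simp add: field_simps power_inverse)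
  ultimately show ?thesis
    using that by blast
qed

lemma fermat_conic_minor_h_poly_eq_0:
  fixes x y :: "'a::field"
  assumes subfield: "is_subfield k" and transcendental: "transcendental_over k x"
    and curve: "x ^ n + y ^ m = 1" and "n > 0" and hasse: "hasse_derivatives k x D"
    and wronskian: "conic_wronskian D x y (\<lambda>i. i) = 0"
    and M: "(of_nat m :: 'a) \<noteq> 0" and small: "(120::'a) \<noteq> 0"
  shows "conic_minor (h_poly (\<lambda>j. of_nat (n choose j)) (of_nat m :: 'a)) = 0"
proof -
  let ?Q = "conic_minor (h_poly (\<lambda>j. of_nat (n choose j)) (of_nat m :: 'a))"
  have one: "1 \<in> k" by (rule subfield_one[OF subfield])
  have x: "x \<noteq> 0"
    using transcendental_power_add_neq_0[OF subfield transcendental subfield_zero[OF subfield],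
        of 1]
    by simp
  have w: "x ^ n \<noteq> 1"
    using transcendental_power_add_neq_0[OF subfield transcendental subfield_uminus[OF subfield one]
        \<open>n > 0\<close>] by simp
  have curve': "y ^ m = 1 - x ^ n" using curve by (simp add: algebra_simps)
  have y: "y \<noteq> 0" using curve' w M by (cases m) auto
  obtain H R where log_identity: "H * pderiv R = smult (of_nat m) (R * pderiv H)"
    and H0: "coeff H 0 = 1"
    and D: "\<And>i. i < 6 \<Longrightarrow> D i y = y * inverse (x * (1 - x ^ n)) ^ i * coeff H i"
    and rho: "\<And>j. j < 6 \<Longrightarrow> coeff R j = poly (rho_poly (\<lambda>j. of_nat (n choose j)) j) (x ^ n)"
    using fermat_normalized_series[OF hasse one curve' x w y] by blast
  have "0 = conic_minor (\<lambda>i. D i y)"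
    using wronskian conic_wronskian_classical[OF hasse one] by simp
  also have "\<dots> = conic_minor (\<lambda>i. y * inverse (x * (1 - x ^ n)) ^ i * coeff H i)"
    by (rule conic_minor_cong) (simp add: D)
  also have "\<dots> = y ^ 4 * inverse (x * (1 - x ^ n)) ^ 11 * conic_minor (coeff H)"
    by (rule conic_minor_scale)
  finally have "conic_minor (coeff H) = 0" using x w y by simp
  moreover have "poly ?Q (x ^ n) = conic_minor (coeff H)"
    unfolding poly_conic_minor using M of_nat_nonzero_if_120_nonzero[OF small]
    by (intro conic_minor_cong poly_h_poly[OF log_identity H0]) (simp_all add: rho)
  ultimately have "poly ?Q (x ^ n) = 0" by simp
  moreover have "poly_over k ?Q"
    by (intro poly_over_conic_minor poly_over_h_poly subfield subfield_of_nat)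
  ultimately show ?thesis
    by (intro transcendental_power_poly_eq_0[OF subfield transcendental \<open>n > 0\<close>])
qed

(* At S = 1 only rho_0 and rho_1 survive, and h_k(1) = (- c_1)^k (1/M choose k). *)
lemma exceptional_value_of_h_poly_at_1:
  fixes M :: "'a::field"
  assumes "conic_minor (h_poly c M) = 0" and "c 1 \<noteq> 0" and "M \<noteq> 0" and "(120::'a) \<noteq> 0"
  shows "exceptional_value M"
proof (rule exceptional_value_inverse[OF assms(3)])
  define a where "a i = poly (h_poly c M i) 1" for i
  have rec: "of_nat (Suc k) * a (Suc k) = - c 1 * (inverse M - of_nat k) * a k" if "k \<le> 4" for k
    unfolding a_def using of_nat_nonzero_if_120_nonzero[OF assms(4), of "Suc k"] that assms(3)
    by (intro poly_h_poly_Suc_at_1) simp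
  show "exceptional_value (inverse M)"
  proof (rule exceptional_value_of_binomial_sequence[of a])
    show "conic_minor a = 0"
      using assms(1) unfolding a_def by (simp add: poly_conic_minor[symmetric])
    show "a 1 = - c 1 * inverse M" using rec[of 0] by (simp add: a_def)
  qed (use assms rec in simp_all)
qed

(* For k >= 1 the polynomial h_k is divisible by S with quotient - c_k / M at S = 0; the minor is
   homogeneous of degree 4, so it vanishes on these linear coefficients. *)
lemma exceptional_value_of_h_poly_linear_coeffs:
  fixes M N :: "'a::field"
  assumes "conic_minor (h_poly c M) = 0" and "M \<noteq> 0" and "(120::'a) \<noteq> 0"
    and "N \<noteq> 0" and "c 1 = N"
    and "\<And>k. 1 \<le> k \<Longrightarrow> k \<le> 4 \<Longrightarrow> of_nat (Suc k) * c (Suc k) = (N - of_nat k) * c k"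
  shows "exceptional_value N"
proof -
  have "\<exists>q. h_poly c M i = [:0, 1:] * q" if "1 \<le> i" for i
    using poly_h_poly_at_0[of c M i] that dvd_iff_poly_eq_0[of 0 "h_poly c M i"]
    by (auto elim: dvdE)
  then obtain C where C: "\<And>i. 1 \<le> i \<Longrightarrow> h_poly c M i = [:0, 1:] * C i" by metis
  have "[:0, 1:] ^ 4 * conic_minor C = conic_minor (h_poly c M)"
    using conic_minor_scale[of "[:0, 1:]" 1 C] by (simp add: C cong: conic_minor_cong)
  then have "conic_minor C = 0" using assms(1) by simp
  then have "conic_minor (\<lambda>i. poly (C i) 0) = 0" by (simp add: poly_conic_minor[symmetric])
  moreover have "poly (C i) 0 = - inverse M * 1 ^ i * c i" if "1 \<le> i" "i \<le> 5" for i
  proof -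
    have "of_nat i * M \<noteq> 0"
      using of_nat_nonzero_if_120_nonzero[OF assms(3), of i] that assms(2) by simp
    moreover have "poly (C i) 0 = coeff (h_poly c M i) 1"
      using C[OF that(1)] by (simp add: poly_0_coeff_0)
    moreover obtain k where "i = Suc k" using \<open>1 \<le> i\<close> by (cases i) auto
    ultimately show ?thesis using coeff_h_poly_Suc_1[of k M c] by (simp add: divide_inverse)
  qed
  ultimately have "conic_minor (\<lambda>i. - inverse M * 1 ^ i * c i) = 0"
    using conic_minor_cong[of "\<lambda>i. poly (C i) 0"] by simp
  then have "conic_minor c = 0"
    using assms(2) by (simp only: conic_minor_scale) simp
  then show ?thesis
    by (rule exceptional_value_of_binomial_sequence[where u = 1]) (use assms in simp_all)
qed

lemma prime_gt_5_not_dvd_120: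
  assumes "prime p" and "5 < p"
  shows "\<not> p dvd (120::nat)"
proof
  assume "p dvd (120::nat)"
  then have "p dvd 2 ^ 3 * 3 * 5" by simp
  then have "p dvd 2 \<or> p dvd 3 \<or> p dvd 5"
    using assms(1) by (metis prime_dvd_mult_iff prime_dvd_power)
  then show False using assms(2) by (auto dest: dvd_imp_le)
qed

theorem proposition3p1:
  fixes p h q n m :: nat
    and k :: "'K::field set" and x y :: 'K and D :: "nat \<Rightarrow> 'K \<Rightarrow> 'K"
  assumes "prime p" and "p > 5" and "h \<ge> 1" and "q = p ^ h"
    and "n \<ge> m" and "m > 2" and "\<not> p dvd (m * n)"
    and "fermat_function_field p n m k x y"
    and "hasse_derivatives k x D"
    and "nonclassical_conics D x y"
  shows "p dvd (2 * n - 1) * (n + 1) * (n - 2) * (n - 1)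
       \<and> p dvd (2 * m - 1) * (m + 1) * (m - 2) * (m - 1)"
proof -
  have char: "CHAR('K) = p" and transcendental: "transcendental_over k x"
    and subfield: "is_subfield k" and curve: "x ^ n + y ^ m = 1"
    using assms(8) unfolding fermat_function_field_def alg_closed_subfield_def by auto
  have of_nat_eq_0: "(of_nat a :: 'K) = 0 \<longleftrightarrow> p dvd a" for a
    using of_nat_eq_0_iff_char_dvd[where 'a = 'K] char by simp
  have small: "(120::'K) \<noteq> 0"
    using of_nat_eq_0[of 120] prime_gt_5_not_dvd_120[OF assms(1,2)] by simp
  have N: "(of_nat n :: 'K) \<noteq> 0" and M: "(of_nat m :: 'K) \<noteq> 0"
    using assms(7) by (auto simp: of_nat_eq_0)
  have Q: "conic_minor (h_poly (\<lambda>j. of_nat (n choose j)) (of_nat m :: 'K)) = 0"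
    using assms(5,6)
    by (intro fermat_conic_minor_h_poly_eq_0[OF subfield transcendental curve _ assms(9)
          nonclassical_conics_wronskian_eq_0[OF assms(10)] M small]) simp
  have "exceptional_value (of_nat n :: 'K)"
    by (rule exceptional_value_of_h_poly_linear_coeffs[OF Q M small N])
      (simp_all del: of_nat_Suc add: of_nat_Suc_mult_binomial_Suc)
  moreover have "exceptional_value (of_nat m :: 'K)"
    using N by (intro exceptional_value_of_h_poly_at_1[OF Q _ M small]) simp
  ultimately show ?thesis
    using exceptional_value_of_nat_iff[of _, where 'a = 'K] char assms(5,6) by simp
qed

end
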